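(* Let $(F_{\mathfrak A},\phi_{\mathfrak A,\mathfrak B})$ be an $S_n$-equivariant strict system of sheaves on $X^n$. Then $d_{n,k-1}\circ d_{n,k}=0$ for all $k$.
   Context: $X$ is a complex quasi-projective scheme with a torus $\mathbb T$-action; "sheaf" means $\mathbb T$-equivariant, cohomologically $\mathbb Z/2$-graded coherent sheaf. $[n]=\{1,\dots,n\}$; subsets of $[n]$ carry the binary total order ($A\le B$ iff $\sum_{i\in A}2^i\le\sum_{i\in B}2^i$). Strict system: set partitions of $[n]$ are ordered by refinement; for a set partition $\mathfrak D$, $(X^n)_{\mathfrak D}=\{(x_i):x_i=x_j\iff i,j\text{ in the same block of }\mathfrak D\}$; $\mathfrak A\cap\mathfrak B$ is the partition into nonempty intersections of blocks; $U_{\mathfrak A,\mathfrak B}=\bigcup\{(X^n)_{\mathfrak D}:\mathfrak A\cap\mathfrak D=\mathfrak B\cap\mathfrak D\}$. The system consists of sheaves $F_{\mathfrak A}$ on $X^n$ and homomorphisms $\phi_{\mathfrak A,\mathfrak B}:F_{\mathfrak A}\to F_{\mathfrak B}$ for $\mathfrak A\le\mathfrak B$ with $\phi_{\mathfrak B,\mathfrak C}\phi_{\mathfrak A,\mathfrak B}=\phi_{\mathfrak A,\mathfrak C}$, $\phi_{\mathfrak A,\mathfrak A}=\mathrm{id}$, $\phi_{\mathfrak A,\mathfrak B}|_{U_{\mathfrak A,\mathfrak B}}$ an isomorphism, together with compatible $S_n$-equivariance isomorphisms $(\sigma_X^{-1})^*F_{\mathfrak A}\cong F_{\sigma^{-1}\mathfrak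 A}$. Index trees: an index tree of order $n$ is a rooted tree whose nodes are leaves or have at least two children, with subsets $L_v\subseteq[n]$ at the leaves forming a set partition of $[n]$; for non-leaf $v$, $L_v$ is the union of the labels of leaves below $v$; trees are identified with $L(T)=\{L_v\}$. $\mathfrak A(T)$ is the set of leaf labels, $P(T)$ the set of non-leaf labels, $F_T=F_{\mathfrak A(T)}$, $\mathcal T_{n,k}$ the set of index trees with $k$ non-leaf nodes, and $G_{n,k}=\bigoplus_{T\in\mathcal T_{n,k}}F_T$. Contractions: for a non-leaf, non-root node $v$, $O(T,v)$ deletes $v$ and attaches its children to its parent (labels unchanged). A node is exceptional if it is not a leaf and all its children are leaves; for exceptional $v$, $E(T,v)$ deletes all children of $v$. For a non-leaf node $v$, $s(v)=(-1)^l$ with $l$ the number of $L\in P(T)$ with $L<L_v$. Define $o(T,v)=s(v)\,\mathrm{id}:F_T\to F_{O(T,v)}$ (note $\mathfrak A(O(T,v))=\mathfrak A(T)$) and $e(T,v)=-s(v)\phi_{\mathfrak A(T),\mathfrak A(E(T,v))}:F_T\to F_{E(T,v)}$. The map $d_{n,k}:G_{n,k}\to G_{n,k-1}$ is the sum of all $o(T,v)$ (over $T\in\mathcal T_{n,k}$, $v$ non-leaf non-root) and all $e(T,v)$ (over $T\in\mathcal T_{n,k}$, $v$ exceptional). *)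

theory Defs
  imports Main
begin

definition set_partition :: "nat \<Rightarrow> nat set set \<Rightarrow> bool" where
  "set_partition n A \<longleftrightarrow> (\<forall>B\<in>A. B \<noteq> {} \<and> B \<subseteq> {1..n})
     \<and> (\<forall>B\<in>A. \<forall>C\<in>A. B \<noteq> C \<longrightarrow> B \<inter> C = {}) \<and> \<Union>A = {1..n}"

definition refines :: "nat set set \<Rightarrow> nat set set \<Rightarrow> bool" where
  "refines A B \<longleftrightarrow> (\<forall>a\<in>A. \<exists>b\<in>B. a \<subseteq> b)"

(* binary total order on subsets *)
definition bin :: "nat set \<Rightarrow> nat" where
  "bin S = (\<Sum>i\<in>S. 2 ^ i)"

(* An index tree is identified with its label set L(T). *)
definition leaves :: "nat set set \<Rightarrow> nat set set" where
  "leaves T = {S\<in>T. \<not> (\<exists>C\<in>T. C \<subset> S)}"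

definition nonleaves :: "nat set set \<Rightarrow> nat set set" where
  "nonleaves T = T - leaves T"

definition index_tree :: "nat \<Rightarrow> nat set set \<Rightarrow> bool" where
  "index_tree n T \<longleftrightarrow> T \<subseteq> Pow {1..n} \<and> {1..n} \<in> T \<and> (\<forall>S\<in>T. S \<noteq> {})
     \<and> (\<forall>S\<in>T. \<forall>S'\<in>T. S \<subseteq> S' \<or> S' \<subseteq> S \<or> S \<inter> S' = {})
     \<and> set_partition n (leaves T)"

(* \<T>_{n,k}; empty for negative k *)
definition trees :: "nat \<Rightarrow> int \<Rightarrow> nat set set set" where
  "trees n k = {T. index_tree n T \<and> int (card (nonleaves T)) = k}"

(* exponent l of s(v) = (-1)^l *)
definition sexp :: "nat set set \<Rightarrow> nat set \<Rightarrow> nat" where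
  "sexp T S = card {L\<in>nonleaves T. bin L < bin S}"

definition exceptional :: "nat set set \<Rightarrow> nat set \<Rightarrow> bool" where
  "exceptional T S \<longleftrightarrow> S \<in> nonleaves T \<and> (\<forall>C\<in>T. C \<subset> S \<longrightarrow> C \<in> leaves T)"

(* O(T,v): delete the node v, children reattached to parent *)
definition contrO :: "nat set set \<Rightarrow> nat set \<Rightarrow> nat set set" where
  "contrO T S = T - {S}"

(* E(T,v): delete all children of the exceptional node v *)
definition contrE :: "nat set set \<Rightarrow> nat set \<Rightarrow> nat set set" where
  "contrE T S = T - {C\<in>T. C \<subset> S}"

definition sgn_act :: "nat \<Rightarrow> 'a::ab_group_add \<Rightarrow> 'a" where
  "sgn_act l x = (if even l then x else - x)"

(* Elements of G_{n,k} = \<Oplus>_{T\<in>\<T>_{n,k}} F_T are tree-indexed families *)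
definition in_G :: "(nat set set \<Rightarrow> 'a::ab_group_add set) \<Rightarrow> nat \<Rightarrow> int
     \<Rightarrow> (nat set set \<Rightarrow> 'a) \<Rightarrow> bool" where
  "in_G F n k x \<longleftrightarrow> (\<forall>T. (T \<in> trees n k \<longrightarrow> x T \<in> F (leaves T)) \<and> (T \<notin> trees n k \<longrightarrow> x T = 0))"

definition dmap :: "(nat set set \<Rightarrow> nat set set \<Rightarrow> 'a \<Rightarrow> 'a) \<Rightarrow> nat \<Rightarrow> int
     \<Rightarrow> (nat set set \<Rightarrow> 'a::ab_group_add) \<Rightarrow> (nat set set \<Rightarrow> 'a)" where
  "dmap phi n k x = (\<lambda>T'. if T' \<in> trees n (k - 1) then
      (\<Sum>T\<in>trees n k. \<Sum>S\<in>nonleaves T - {{1..n}}.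
          if contrO T S = T' then sgn_act (sexp T S) (x T) else 0)
    + (\<Sum>T\<in>trees n k. \<Sum>S\<in>{S. exceptional T S}.
          if contrE T S = T' then - sgn_act (sexp T S) (phi (leaves T) (leaves (contrE T S)) (x T)) else 0)
    else 0)"

(* The algebraic part of a strict system: F_A subgroups of an ambient abelian group,
   \<phi>_{A,B} homomorphisms F_A \<rightarrow> F_B for A \<le> B, functorial. *)
definition strict_system_alg :: "nat \<Rightarrow> (nat set set \<Rightarrow> 'a::ab_group_add set)
     \<Rightarrow> (nat set set \<Rightarrow> nat set set \<Rightarrow> 'a \<Rightarrow> 'a) \<Rightarrow> bool" where
  "strict_system_alg n F phi \<longleftrightarrow>
     (\<forall>A. set_partition n A \<longrightarrow> 0 \<in> F A \<and> (\<forall>x\<in>F A. \<forall>y\<in>F A. x + y \<in> F A \<and> - x \<in> F A))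
   \<and> (\<forall>A B. set_partition n A \<and> set_partition n B \<and> refines A B \<longrightarrow>
        (\<forall>x\<in>F A. phi A B x \<in> F B) \<and> (\<forall>x\<in>F A. \<forall>y\<in>F A. phi A B (x + y) = phi A B x + phi A B y))
   \<and> (\<forall>A. set_partition n A \<longrightarrow> (\<forall>x\<in>F A. phi A A x = x))
   \<and> (\<forall>A B C. set_partition n A \<and> set_partition n B \<and> set_partition n C
        \<and> refines A B \<and> refines B C \<longrightarrow> (\<forall>x\<in>F A. phi B C (phi A B x) = phi A C x))"

end

theory Submission
  imports Defs "HOL-Library.Disjoint_Sets"
begin

(* A term of d(d x) at T'' comes from a tree T and two successive contractions leading from T
   to T''; by functoriality of phi it is plus or minus phi_{A(T),A(T'')} x_T.  These terms cancel
   in pairs.  If the second contraction erases the children of a node containing the node v of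
   the first one, then performing the first step as O(T,v) or as E(T,v) gives the same tree, and
   the signs differ by the extra factor -1 of e.  Otherwise the two contractions commute; their
   nodes are distinct, so exactly one of them comes first in the binary order, and removing it
   lowers the exponent s of the other by one: the two orders have opposite signs. *)

section \<open>Index trees and their contractions\<close>

lemma leaves_iff: "S \<in> leaves T \<longleftrightarrow> S \<in> T \<and> (\<forall>C\<in>T. \<not> C \<subset> S)"
  by (auto simp: leaves_def)

lemma nonleaves_iff: "S \<in> nonleaves T \<longleftrightarrow> S \<in> T \<and> (\<exists>C\<in>T. C \<subset> S)"
  by (auto simp: nonleaves_def leaves_def)

lemma index_tree_subset: "index_tree n T \<Longrightarrow> S \<in> T \<Longrightarrow> S \<subseteq> {1..n}"
  by (auto simp: index_tree_def)

lemma index_tree_nonempty: "index_tree n T \<Longrightarrow> S \<in> T \<Longrightarrow> S \<noteq> {}"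
  by (auto simp: index_tree_def)

lemma index_tree_laminar:
  "index_tree n T \<Longrightarrow> S \<in> T \<Longrightarrow> S' \<in> T \<Longrightarrow> S \<subseteq> S' \<or> S' \<subseteq> S \<or> S \<inter> S' = {}"
  by (auto simp: index_tree_def)

lemma finite_index_tree: "index_tree n T \<Longrightarrow> finite T"
  unfolding index_tree_def by (meson finite_Pow_iff finite_atLeastAtMost finite_subset)

lemma finite_nonleaves: "index_tree n T \<Longrightarrow> finite (nonleaves T)"
  by (simp add: finite_index_tree nonleaves_def)

lemma finite_trees: "finite (trees n k)"
proof -
  have "trees n k \<subseteq> Pow (Pow {1..n})"
    by (auto simp: trees_def index_tree_def)
  then show ?thesis
    by (meson finite_Pow_iff finite_atLeastAtMost finite_subset)
qed

lemma set_partition_leaves: "index_tree n T \<Longrightarrow> set_partition n (leaves T)"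
  by (simp add: index_tree_def)

lemma leaf_below_or_disjoint:
  assumes "index_tree n T" "S \<in> nonleaves T" "L \<in> leaves T"
  shows "L \<subset> S \<or> L \<inter> S = {}"
  using index_tree_laminar[OF assms(1), of L S] assms(2,3)
  by (auto simp: leaves_iff nonleaves_iff)

lemma leaves_contrO:
  assumes "S \<in> nonleaves T"
  shows "leaves (contrO T S) = leaves T"
proof (rule set_eqI)
  obtain C where C: "C \<in> T" "C \<subset> S"
    using assms by (auto simp: nonleaves_iff)
  fix D
  show "D \<in> leaves (contrO T S) \<longleftrightarrow> D \<in> leaves T"
  proof
    assume "D \<in> leaves (contrO T S)"
    then have D: "D \<in> T" "\<forall>C\<in>T. C \<noteq> S \<longrightarrow> \<not> C \<subset> D"
      by (simp_all add: leaves_iff contrO_def)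
    have "\<not> S \<subset> D"
      using D(2) C by (metis psubset_trans less_irrefl)
    with D show "D \<in> leaves T"
      by (auto simp: leaves_iff)
  next
    assume "D \<in> leaves T"
    with C show "D \<in> leaves (contrO T S)"
      by (auto simp: leaves_iff contrO_def)
  qed
qed

lemma nonleaves_contrO: "S \<in> nonleaves T \<Longrightarrow> nonleaves (contrO T S) = nonleaves T - {S}"
  using leaves_contrO[of S T] by (auto simp: nonleaves_def contrO_def)

lemma index_tree_contrO:
  "index_tree n T \<Longrightarrow> S \<in> nonleaves T \<Longrightarrow> S \<noteq> {1..n} \<Longrightarrow> index_tree n (contrO T S)"
  using leaves_contrO[of S T] by (auto simp: index_tree_def contrO_def)

lemma leaves_contrE:
  assumes T: "index_tree n T" and S: "exceptional T S"
  shows "leaves (contrE T S) = insert S (leaves T - {C. C \<subset> S})"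
proof -
  have ST: "S \<in> T"
    using S by (simp add: exceptional_def nonleaves_def)
  have S_leaf: "S \<in> leaves (contrE T S)"
    unfolding leaves_iff contrE_def using ST by blast
  have leaf_of_T: "D \<in> leaves T" if D: "D \<in> leaves (contrE T S)" "D \<noteq> S" for D
  proof -
    have DT: "D \<in> T" "\<not> D \<subset> S" and no_child: "\<And>C. C \<in> T \<Longrightarrow> \<not> C \<subset> S \<Longrightarrow> \<not> C \<subset> D"
      using D(1) unfolding leaves_iff contrE_def by blast+
    have "\<not> C \<subset> D" if C: "C \<in> T" "C \<subset> S" for C
    proof
      assume "C \<subset> D"
      then have "D \<inter> S \<noteq> {}"
        using C index_tree_nonempty[OF T C(1)] by blast
      then have "S \<subset> D"
        using index_tree_laminar[OF T DT(1) ST] DT(2) D(2) by blast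
      then show False
        using no_child[OF ST] by blast
    qed
    then show ?thesis
      using DT(1) no_child unfolding leaves_iff by blast
  qed
  have "D \<in> leaves (contrE T S)" if "D \<in> leaves T" "\<not> D \<subset> S" for D
    using that unfolding leaves_iff contrE_def by blast
  moreover have "\<not> D \<subset> S" if "D \<in> leaves (contrE T S)" for D
    using that unfolding leaves_iff contrE_def by blast
  ultimately show ?thesis
    using S_leaf leaf_of_T by blast
qed

lemma nonleaves_contrE:
  "index_tree n T \<Longrightarrow> exceptional T S \<Longrightarrow> nonleaves (contrE T S) = nonleaves T - {S}"
  unfolding nonleaves_def leaves_contrE[of n T S]
  by (auto simp: exceptional_def contrE_def nonleaves_def)

lemma set_partition_leaves_contrE:
  assumes T: "index_tree n T" and S: "exceptional T S"
  shows "set_partition n (insert S (leaves T - {C. C \<subset> S}))"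
proof -
  have S_nonleaf: "S \<in> nonleaves T"
    using S by (simp add: exceptional_def)
  then have ST: "S \<in> T"
    by (simp add: nonleaves_def)
  have partition: "set_partition n (leaves T)"
    by (rule set_partition_leaves[OF T])
  have disjoint: "L \<inter> S = {}" if "L \<in> leaves T" "\<not> L \<subset> S" for L
    using leaf_below_or_disjoint[OF T S_nonleaf that(1)] that(2) by blast
  show ?thesis
    unfolding set_partition_def
  proof (intro conjI ballI impI)
    fix B assume "B \<in> insert S (leaves T - {C. C \<subset> S})"
    then have "B \<in> T"
      using ST by (auto simp: leaves_def)
    then show "B \<noteq> {}" "B \<subseteq> {1..n}"
      using index_tree_nonempty[OF T] index_tree_subset[OF T] by auto
  next
    fix B C
    assume "B \<in> insert S (leaves T - {C. C \<subset> S})" "C \<in> insert S (leaves T - {C. C \<subset> S})" "B \<noteq> C"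
    then show "B \<inter> C = {}"
      using partition disjoint unfolding set_partition_def by blast
  next
    have leaves_cover: "\<Union>(leaves T) = {1..n}"
      using partition by (simp add: set_partition_def)
    show "\<Union>(insert S (leaves T - {C. C \<subset> S})) = {1..n}"
    proof
      show "\<Union>(insert S (leaves T - {C. C \<subset> S})) \<subseteq> {1..n}"
        using index_tree_subset[OF T ST] leaves_cover by blast
      show "{1..n} \<subseteq> \<Union>(insert S (leaves T - {C. C \<subset> S}))"
      proof
        fix x assume "x \<in> {1..n}"
        then obtain L where "L \<in> leaves T" "x \<in> L"
          using leaves_cover by blast
        then show "x \<in> \<Union>(insert S (leaves T - {C. C \<subset> S}))"
          by (cases "L \<subset> S") blast+
      qed
    qed
  qed
qed

lemma index_tree_contrE:
  assumes T: "index_tree n T" and S: "exceptional T S"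
  shows "index_tree n (contrE T S)"
proof -
  have "S \<subseteq> {1..n}"
    using S index_tree_subset[OF T] by (auto simp: exceptional_def nonleaves_def)
  then have "{1..n} \<in> contrE T S"
    using T by (auto simp: contrE_def index_tree_def)
  then show ?thesis
    using T set_partition_leaves_contrE[OF T S]
    unfolding index_tree_def leaves_contrE[OF T S] by (auto simp: contrE_def)
qed

datatype contraction = ContrO "nat set" | ContrE "nat set"

fun node :: "contraction \<Rightarrow> nat set" where
  "node (ContrO S) = S"
| "node (ContrE S) = S"

fun contract :: "nat set set \<Rightarrow> contraction \<Rightarrow> nat set set" where
  "contract T (ContrO S) = contrO T S"
| "contract T (ContrE S) = contrE T S"

fun applicable :: "nat \<Rightarrow> nat set set \<Rightarrow> contraction \<Rightarrow> bool" where
  "applicable n T (ContrO S) \<longleftrightarrow> S \<in> nonleaves T \<and> S \<noteq> {1..n}"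
| "applicable n T (ContrE S) \<longleftrightarrow> exceptional T S"

(* The Suc is the extra sign of e(T,v) = -s(v) phi. *)
fun sign_exp :: "nat set set \<Rightarrow> contraction \<Rightarrow> nat" where
  "sign_exp T (ContrO S) = sexp T S"
| "sign_exp T (ContrE S) = Suc (sexp T S)"

definition contractions :: "nat \<Rightarrow> nat set set \<Rightarrow> contraction set" where
  "contractions n T = {c. applicable n T c}"

lemma node_nonleaf: "applicable n T c \<Longrightarrow> node c \<in> nonleaves T"
  by (cases c) (auto simp: exceptional_def)

lemma finite_node: "index_tree n T \<Longrightarrow> applicable n T c \<Longrightarrow> finite (node c)"
  using node_nonleaf[of n T c] index_tree_subset[of n T "node c"]
  by (auto simp: nonleaves_def intro: finite_subset)

lemma index_tree_contract: "index_tree n T \<Longrightarrow> applicable n T c \<Longrightarrow> index_tree n (contract T c)"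
  by (cases c) (auto intro: index_tree_contrO index_tree_contrE)

lemma nonleaves_contract:
  "index_tree n T \<Longrightarrow> applicable n T c \<Longrightarrow> nonleaves (contract T c) = nonleaves T - {node c}"
  by (cases c) (auto simp: nonleaves_contrO nonleaves_contrE)

(* HOL-Library.Disjoint_Sets has its own refines, hence the qualified name Defs.refines. *)
lemma refines_leaves_contract:
  "index_tree n T \<Longrightarrow> applicable n T c \<Longrightarrow> Defs.refines (leaves T) (leaves (contract T c))"
  by (cases c) (auto simp: Defs.refines_def leaves_contrO leaves_contrE exceptional_def)

lemma finite_contractions:
  assumes "index_tree n T"
  shows "finite (contractions n T)"
proof -
  have "contractions n T \<subseteq> ContrO ` nonleaves T \<union> ContrE ` nonleaves T"
  proof
    fix c assume "c \<in> contractions n T"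
    then show "c \<in> ContrO ` nonleaves T \<union> ContrE ` nonleaves T"
      using node_nonleaf[of n T c] by (cases c) (auto simp: contractions_def)
  qed
  then show ?thesis
    using finite_nonleaves[OF assms] by (meson finite_UnI finite_imageI finite_subset)
qed

lemma contract_trees:
  assumes T: "T \<in> trees n k" and c: "c \<in> contractions n T"
  shows "contract T c \<in> trees n (k - 1)"
proof -
  have tree: "index_tree n T" and applicable: "applicable n T c"
    using T c by (simp_all add: trees_def contractions_def)
  have "card (nonleaves (contract T c)) = card (nonleaves T) - 1"
    using nonleaves_contract[OF tree applicable] node_nonleaf[OF applicable] finite_nonleaves[OF tree]
    by simp
  moreover have "card (nonleaves T) > 0"
    using node_nonleaf[OF applicable] finite_nonleaves[OF tree] card_gt_0_iff by blast
  ultimately show ?thesis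
    using T index_tree_contract[OF tree applicable] by (auto simp: trees_def)
qed

lemma sum_contractions:
  assumes "index_tree n T"
  shows "(\<Sum>c\<in>contractions n T. g c)
    = (\<Sum>S\<in>nonleaves T - {{1..n}}. g (ContrO S)) + (\<Sum>S\<in>{S. exceptional T S}. g (ContrE S))"
proof -
  have split: "contractions n T = ContrO ` (nonleaves T - {{1..n}}) \<union> ContrE ` {S. exceptional T S}"
  proof (rule set_eqI)
    fix c show "c \<in> contractions n T \<longleftrightarrow> c \<in> ContrO ` (nonleaves T - {{1..n}}) \<union> ContrE ` {S. exceptional T S}"
      by (cases c) (auto simp: contractions_def)
  qed
  have "finite (contractions n T)"
    using finite_contractions[OF assms] .
  then have "(\<Sum>c\<in>contractions n T. g c)
      = (\<Sum>c\<in>ContrO ` (nonleaves T - {{1..n}}). g c) + (\<Sum>c\<in>ContrE ` {S. exceptional T S}. g c)"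
    unfolding split by (intro sum.union_disjoint) auto
  then show ?thesis
    by (simp add: sum.reindex inj_on_def)
qed

lemma sexp_contract:
  assumes T: "index_tree n T" and c: "applicable n T c"
  shows "sexp T S = sexp (contract T c) S + (if bin (node c) < bin S then 1 else 0)"
proof -
  define below where "below = {L \<in> nonleaves T. bin L < bin S}"
  have "{L \<in> nonleaves (contract T c). bin L < bin S} = below - {node c}"
    using nonleaves_contract[OF T c] by (auto simp: below_def)
  moreover have "card below = card (below - {node c}) + (if bin (node c) < bin S then 1 else 0)"
  proof (cases "bin (node c) < bin S")
    case True
    then have "node c \<in> below"
      using node_nonleaf[OF c] by (simp add: below_def)
    moreover have "finite below"
      using finite_nonleaves[OF T] by (simp add: below_def)
    ultimately show ?thesis
      using True card.remove[of below "node c"] by simp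
  next
    case False
    then show ?thesis
      by (simp add: below_def)
  qed
  ultimately show ?thesis
    unfolding sexp_def below_def by simp
qed

lemma sign_exp_contract:
  "index_tree n T \<Longrightarrow> applicable n T c
    \<Longrightarrow> sign_exp T d = sign_exp (contract T c) d + (if bin (node c) < bin (node d) then 1 else 0)"
  by (cases d) (simp_all add: sexp_contract[of n T c])

lemma sign_exp_cong: "nonleaves T = nonleaves T' \<Longrightarrow> sign_exp T c = sign_exp T' c"
  by (cases c) (simp_all add: sexp_def)

section \<open>Cancellation of pairs of contractions\<close>

lemma bit_bin_iff: "finite S \<Longrightarrow> bit (bin S) i \<longleftrightarrow> i \<in> S"
proof (induction S arbitrary: i rule: finite_induct)
  case empty
  then show ?case by (simp add: bin_def)
next
  case (insert a S)
  have "bin (insert a S) = 2 ^ a + bin S"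
    using insert by (simp add: bin_def)
  moreover have "bit (2 ^ a + bin S) i \<longleftrightarrow> bit ((2::nat) ^ a) i \<or> bit (bin S) i"
    by (rule bit_disjunctive_add_iff) (use insert in \<open>auto simp: bit_exp_iff\<close>)
  ultimately show ?case
    using insert by (auto simp: bit_exp_iff)
qed

lemma bin_eq_iff: "finite S \<Longrightarrow> finite S' \<Longrightarrow> bin S = bin S' \<longleftrightarrow> S = S'"
  by (metis bit_bin_iff set_eq_iff)

definition contraction_pairs :: "nat \<Rightarrow> nat set set \<Rightarrow> (contraction \<times> contraction) set" where
  "contraction_pairs n T = (SIGMA c:contractions n T. contractions n (contract T c))"

fun contract2 :: "nat set set \<Rightarrow> contraction \<times> contraction \<Rightarrow> nat set set" where
  "contract2 T (c, d) = contract (contract T c) d"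

fun sign_exp2 :: "nat set set \<Rightarrow> contraction \<times> contraction \<Rightarrow> nat" where
  "sign_exp2 T (c, d) = sign_exp T c + sign_exp (contract T c) d"

fun erases :: "contraction \<Rightarrow> contraction \<Rightarrow> bool" where
  "erases (ContrO S) c \<longleftrightarrow> False"
| "erases (ContrE S) c \<longleftrightarrow> node c \<subset> S"

fun flip :: "contraction \<Rightarrow> contraction" where
  "flip (ContrO S) = ContrE S"
| "flip (ContrE S) = ContrO S"

lemma node_flip [simp]: "node (flip c) = node c"
  by (cases c) simp_all

lemma flip_flip [simp]: "flip (flip c) = c"
  by (cases c) simp_all

lemma flip_neq: "flip c \<noteq> c"
  by (cases c) simp_all

lemma erases_flip [simp]: "erases d (flip c) = erases d c"
  by (cases d) simp_all

lemma sign_exp_flip: "sign_exp T (flip c) + sign_exp T c = Suc (2 * sexp T (node c))"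
  by (cases c) simp_all

lemma contract_commute: "contract (contract T c) d = contract (contract T d) c"
  by (cases c; cases d) (auto simp: contrO_def contrE_def)

lemma contract_flip: "erases d c \<Longrightarrow> contract (contract T (flip c)) d = contract (contract T c) d"
  by (cases c; cases d) (auto simp: contrO_def contrE_def dest: psubset_trans)

lemma applicable_after_contract:
  assumes T: "index_tree n T" and c: "applicable n T c" and d: "applicable n (contract T c) d"
  shows "node d \<noteq> node c" "\<not> erases c d"
proof -
  have "node d \<in> nonleaves T - {node c}"
    using node_nonleaf[OF d] nonleaves_contract[OF T c] by simp
  moreover have "node d \<in> contract T c"
    using node_nonleaf[OF d] by (simp add: nonleaves_def)
  ultimately show "node d \<noteq> node c" "\<not> erases c d"
    by (cases c; auto simp: contrE_def)+
qed

lemma exceptional_contract_below: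
  assumes T: "index_tree n T" and c: "applicable n T c" and below: "node c \<subset> S"
  shows "exceptional (contract T c) S
    \<longleftrightarrow> S \<in> nonleaves T \<and> (\<forall>C\<in>T. C \<subset> S \<and> C \<noteq> node c \<longrightarrow> C \<in> leaves T)"
proof (cases c)
  case (ContrO S1)
  then have "S \<noteq> S1" "S1 \<in> nonleaves T"
    using below c by auto
  then show ?thesis
    unfolding ContrO exceptional_def contract.simps node.simps nonleaves_contrO[OF \<open>S1 \<in> nonleaves T\<close>]
      leaves_contrO[OF \<open>S1 \<in> nonleaves T\<close>]
    unfolding contrO_def by auto
next
  case (ContrE S1)
  then have S1: "exceptional T S1"
    using c by simp
  moreover have "S \<noteq> S1"
    using below ContrE by auto
  moreover have "\<forall>C\<in>T. C \<subset> S1 \<longrightarrow> C \<in> leaves T"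
    using S1 by (simp add: exceptional_def)
  ultimately show ?thesis
    unfolding ContrE exceptional_def contract.simps node.simps nonleaves_contrE[OF T S1]
      leaves_contrE[OF T S1]
    unfolding contrE_def by auto
qed

lemma applicable_flip:
  assumes T: "index_tree n T" and c: "applicable n T c" and below: "node c \<subset> S"
    and S: "exceptional (contract T c) S"
  shows "applicable n T (flip c)"
proof -
  have S_nonleaf: "S \<in> nonleaves T" and leaves_below: "\<forall>C\<in>T. C \<subset> S \<and> C \<noteq> node c \<longrightarrow> C \<in> leaves T"
    using S exceptional_contract_below[OF T c below] by simp_all
  show ?thesis
  proof (cases c)
    case (ContrO S1)
    with c below leaves_below show ?thesis
      by (auto simp: exceptional_def dest: psubset_trans)
  next
    case (ContrE S1)
    have "S \<subseteq> {1..n}"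
      using index_tree_subset[OF T] S_nonleaf by (simp add: nonleaves_def)
    with ContrE c below show ?thesis
      by (auto simp: exceptional_def)
  qed
qed

lemma applicable_contract_iff:
  assumes T: "index_tree n T" and c: "applicable n T c"
    and distinct: "node d \<noteq> node c" and not_erased: "\<not> erases d c" "\<not> erases c d"
  shows "applicable n (contract T c) d \<longleftrightarrow> applicable n T d"
proof (cases d)
  case (ContrO S')
  with distinct show ?thesis
    using nonleaves_contract[OF T c] by auto
next
  case (ContrE S')
  then have "\<not> node c \<subset> S'" "S' \<noteq> node c"
    using not_erased distinct by simp_all
  show ?thesis
  proof (cases c)
    case (ContrO S)
    then have "S \<in> nonleaves T" "\<not> S \<subset> S'" "S' \<noteq> S"
      using c \<open>\<not> node c \<subset> S'\<close> \<open>S' \<noteq> node c\<close> by simp_all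
    then show ?thesis
      unfolding ContrE ContrO applicable.simps exceptional_def contract.simps
        nonleaves_contrO[OF \<open>S \<in> nonleaves T\<close>] leaves_contrO[OF \<open>S \<in> nonleaves T\<close>]
      unfolding contrO_def by auto
  next
    case (ContrE S)
    then have S: "exceptional T S" and "\<not> S' \<subset> S"
      using c not_erased(2) \<open>d = ContrE S'\<close> by simp_all
    have outside_S: "\<not> C \<subset> S \<and> C \<noteq> S" if "S' \<in> T" "C \<in> T" "C \<subset> S'" for C
    proof -
      have "S \<in> T"
        using S by (simp add: exceptional_def nonleaves_def)
      then have "S \<inter> S' = {}"
        using index_tree_laminar[OF T, of S S'] that(1) \<open>\<not> node c \<subset> S'\<close> \<open>S' \<noteq> node c\<close>
          \<open>\<not> S' \<subset> S\<close> ContrE by auto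
      then show ?thesis
        using that(3) index_tree_nonempty[OF T that(2)] by blast
    qed
    have "S' \<noteq> S"
      using \<open>S' \<noteq> node c\<close> ContrE by simp
    then show ?thesis
      unfolding \<open>d = ContrE S'\<close> ContrE applicable.simps exceptional_def contract.simps
        nonleaves_contrE[OF T S] leaves_contrE[OF T S]
      unfolding contrE_def using outside_S by (auto simp: nonleaves_def)
  qed
qed

lemma flip_pair_mem:
  assumes T: "index_tree n T" and p: "(c, d) \<in> contraction_pairs n T" and erased: "erases d c"
  shows "(flip c, d) \<in> contraction_pairs n T"
proof -
  obtain S where d: "d = ContrE S" and below: "node c \<subset> S"
    using erased by (cases d) auto
  have c: "applicable n T c" and S: "exceptional (contract T c) S"
    using p d by (simp_all add: contraction_pairs_def contractions_def)
  have flip: "applicable n T (flip c)"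
    by (rule applicable_flip[OF T c below S])
  have "exceptional (contract T (flip c)) S"
    using S exceptional_contract_below[OF T c below] exceptional_contract_below[OF T flip] below by simp
  then show ?thesis
    using flip d by (simp add: contraction_pairs_def contractions_def)
qed

lemma swap_pair_mem:
  assumes T: "index_tree n T" and p: "(c, d) \<in> contraction_pairs n T" and not_erased: "\<not> erases d c"
  shows "(d, c) \<in> contraction_pairs n T"
proof -
  have c: "applicable n T c" and d_after_c: "applicable n (contract T c) d"
    using p by (simp_all add: contraction_pairs_def contractions_def)
  note after = applicable_after_contract[OF T c d_after_c]
  have d: "applicable n T d"
    using applicable_contract_iff[OF T c after(1) not_erased after(2)] d_after_c by simp
  have "applicable n (contract T d) c"
    using applicable_contract_iff[OF T d after(1)[symmetric] after(2) not_erased] c by simp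
  with d show ?thesis
    by (simp add: contraction_pairs_def contractions_def)
qed

lemma odd_sign_exp2_flip:
  assumes T: "index_tree n T" and "(c, d) \<in> contraction_pairs n T" "(flip c, d) \<in> contraction_pairs n T"
  shows "odd (sign_exp2 T (flip c, d) + sign_exp2 T (c, d))"
proof -
  have "applicable n T c" "applicable n T (flip c)"
    using assms(2,3) by (simp_all add: contraction_pairs_def contractions_def)
  then have "sign_exp (contract T (flip c)) d = sign_exp (contract T c) d"
    using nonleaves_contract[OF T] by (intro sign_exp_cong) simp
  then have sum_eq: "sign_exp2 T (flip c, d) + sign_exp2 T (c, d)
      = Suc (2 * (sexp T (node c) + sign_exp (contract T c) d))"
    using sign_exp_flip[of T c] by simp
  show ?thesis
    unfolding sum_eq by simp
qed

lemma odd_sign_exp2_swap: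
  assumes T: "index_tree n T" and "(c, d) \<in> contraction_pairs n T" "(d, c) \<in> contraction_pairs n T"
  shows "odd (sign_exp2 T (d, c) + sign_exp2 T (c, d))"
proof -
  have c: "applicable n T c" "applicable n (contract T c) d" and d: "applicable n T d"
    using assms(2,3) by (simp_all add: contraction_pairs_def contractions_def)
  have "bin (node c) \<noteq> bin (node d)"
    using applicable_after_contract(1)[OF T c] finite_node[OF T] c(1) d bin_eq_iff by metis
  moreover have "sign_exp T d = sign_exp (contract T c) d + (if bin (node c) < bin (node d) then 1 else 0)"
    by (rule sign_exp_contract[OF T c(1)])
  moreover have "sign_exp T c = sign_exp (contract T d) c + (if bin (node d) < bin (node c) then 1 else 0)"
    by (rule sign_exp_contract[OF T d])
  ultimately show ?thesis
    by auto
qed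

fun partner :: "contraction \<times> contraction \<Rightarrow> contraction \<times> contraction" where
  "partner (c, d) = (if erases d c then (flip c, d) else (d, c))"

lemma partner_involution:
  assumes T: "index_tree n T" and p: "p \<in> contraction_pairs n T"
  shows "partner p \<in> contraction_pairs n T \<and> partner (partner p) = p \<and> partner p \<noteq> p
    \<and> contract2 T (partner p) = contract2 T p \<and> odd (sign_exp2 T (partner p) + sign_exp2 T p)"
proof -
  obtain c d where p_eq: "p = (c, d)"
    by fastforce
  show ?thesis
  proof (cases "erases d c")
    case True
    have "(flip c, d) \<in> contraction_pairs n T"
      using flip_pair_mem[OF T _ True] p p_eq by simp
    then show ?thesis
      using True odd_sign_exp2_flip[OF T] contract_flip[OF True] flip_neq p p_eq by auto
  next
    case False
    have "(d, c) \<in> contraction_pairs n T"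
      using swap_pair_mem[OF T _ False] p p_eq by simp
    moreover have "\<not> erases c d" "d \<noteq> c"
      using applicable_after_contract[of n T c d] T p p_eq
      by (auto simp: contraction_pairs_def contractions_def)
    ultimately show ?thesis
      using False odd_sign_exp2_swap[OF T] contract_commute p p_eq by auto
  qed
qed

lemma sgn_act_add_odd: "odd (a + b) \<Longrightarrow> sgn_act a y + sgn_act b y = 0"
  by (auto simp: sgn_act_def)

lemma sum_contraction_pairs_eq_0:
  assumes T: "index_tree n T"
  shows "(\<Sum>p\<in>contraction_pairs n T. if contract2 T p = T' then sgn_act (sign_exp2 T p) y else 0) = 0"
proof (rule sum_involution_eq_0[where h = partner])
  fix p assume "p \<in> contraction_pairs n T"
  note partner = partner_involution[OF T this]
  then show "partner p \<in> contraction_pairs n T" "partner (partner p) = p" "partner p \<noteq> p"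
    by blast+
  show "(if contract2 T (partner p) = T' then sgn_act (sign_exp2 T (partner p)) y else 0)
      + (if contract2 T p = T' then sgn_act (sign_exp2 T p) y else 0) = 0"
    using partner sgn_act_add_odd[of "sign_exp2 T (partner p)" "sign_exp2 T p" y] by simp
qed

section \<open>The differential\<close>

lemma sgn_act_add: "sgn_act l (x + y) = sgn_act l x + sgn_act l y"
  by (simp add: sgn_act_def)

lemma sgn_act_sgn_act: "sgn_act l (sgn_act m x) = sgn_act (l + m) x"
  by (simp add: sgn_act_def)

lemma sum_swap_nested:
  "(\<Sum>a\<in>A. \<Sum>b\<in>B a. \<Sum>c\<in>C. \<Sum>d\<in>D c. f a b c d) = (\<Sum>c\<in>C. \<Sum>d\<in>D c. \<Sum>a\<in>A. \<Sum>b\<in>B a. f a b c d)"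
proof -
  have "(\<Sum>a\<in>A. \<Sum>b\<in>B a. \<Sum>c\<in>C. \<Sum>d\<in>D c. f a b c d) = (\<Sum>a\<in>A. \<Sum>c\<in>C. \<Sum>b\<in>B a. \<Sum>d\<in>D c. f a b c d)"
    by (intro sum.cong refl sum.swap)
  also have "\<dots> = (\<Sum>c\<in>C. \<Sum>a\<in>A. \<Sum>b\<in>B a. \<Sum>d\<in>D c. f a b c d)"
    by (rule sum.swap)
  also have "\<dots> = (\<Sum>c\<in>C. \<Sum>d\<in>D c. \<Sum>a\<in>A. \<Sum>b\<in>B a. f a b c d)"
    by (intro sum.cong refl) (simp add: sum.swap[of _ "D _"])
  finally show ?thesis .
qed

definition contraction_map ::
    "(nat set set \<Rightarrow> nat set set \<Rightarrow> 'a \<Rightarrow> 'a) \<Rightarrow> nat set set \<Rightarrow> contraction \<Rightarrow> 'a::ab_group_add \<Rightarrow> 'a" where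
  "contraction_map phi T c y = sgn_act (sign_exp T c) (phi (leaves T) (leaves (contract T c)) y)"

locale strict_system =
  fixes n :: nat and F :: "nat set set \<Rightarrow> 'a::ab_group_add set"
    and phi :: "nat set set \<Rightarrow> nat set set \<Rightarrow> 'a \<Rightarrow> 'a"
  assumes strict_system_alg: "strict_system_alg n F phi"
begin

lemma zero_mem: "set_partition n A \<Longrightarrow> 0 \<in> F A"
  using strict_system_alg by (simp add: strict_system_alg_def)

lemma add_mem: "set_partition n A \<Longrightarrow> x \<in> F A \<Longrightarrow> y \<in> F A \<Longrightarrow> x + y \<in> F A"
  using strict_system_alg by (simp add: strict_system_alg_def)

lemma uminus_mem: "set_partition n A \<Longrightarrow> x \<in> F A \<Longrightarrow> - x \<in> F A"
  using strict_system_alg by (simp add: strict_system_alg_def)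

lemma sgn_act_mem: "set_partition n A \<Longrightarrow> x \<in> F A \<Longrightarrow> sgn_act l x \<in> F A"
  by (simp add: sgn_act_def uminus_mem)

lemma sum_mem: "set_partition n A \<Longrightarrow> (\<And>i. i \<in> I \<Longrightarrow> f i \<in> F A) \<Longrightarrow> sum f I \<in> F A"
  by (induction I rule: infinite_finite_induct) (auto intro: zero_mem add_mem)

lemma phi_mem:
  "set_partition n A \<Longrightarrow> set_partition n B \<Longrightarrow> Defs.refines A B \<Longrightarrow> x \<in> F A \<Longrightarrow> phi A B x \<in> F B"
  using strict_system_alg by (simp add: strict_system_alg_def)

lemma phi_add:
  "set_partition n A \<Longrightarrow> set_partition n B \<Longrightarrow> Defs.refines A B \<Longrightarrow> x \<in> F A \<Longrightarrow> y \<in> F A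
    \<Longrightarrow> phi A B (x + y) = phi A B x + phi A B y"
  using strict_system_alg by (simp add: strict_system_alg_def)

lemma phi_id: "set_partition n A \<Longrightarrow> x \<in> F A \<Longrightarrow> phi A A x = x"
  using strict_system_alg by (simp add: strict_system_alg_def)

lemma phi_comp:
  "set_partition n A \<Longrightarrow> set_partition n B \<Longrightarrow> set_partition n C \<Longrightarrow> Defs.refines A B \<Longrightarrow> Defs.refines B C
    \<Longrightarrow> x \<in> F A \<Longrightarrow> phi B C (phi A B x) = phi A C x"
  using strict_system_alg unfolding strict_system_alg_def by blast

lemma phi_zero:
  assumes "set_partition n A" "set_partition n B" "Defs.refines A B"
  shows "phi A B 0 = 0"
  using phi_add[OF assms zero_mem[OF assms(1)] zero_mem[OF assms(1)]] by simp

lemma phi_uminus: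
  assumes "set_partition n A" "set_partition n B" "Defs.refines A B" "x \<in> F A"
  shows "phi A B (- x) = - phi A B x"
  using phi_add[OF assms uminus_mem[OF assms(1,4)]] phi_zero[OF assms(1-3)]
  by (simp add: eq_neg_iff_add_eq_0 add.commute)

lemma phi_sgn_act:
  assumes "set_partition n A" "set_partition n B" "Defs.refines A B" "x \<in> F A"
  shows "phi A B (sgn_act l x) = sgn_act l (phi A B x)"
  using phi_uminus[OF assms] by (simp add: sgn_act_def)

context
  fixes T c
  assumes T: "index_tree n T" and c: "applicable n T c"
begin

lemma contraction_partitions:
  "set_partition n (leaves T)" "set_partition n (leaves (contract T c))"
  "Defs.refines (leaves T) (leaves (contract T c))"
  using set_partition_leaves index_tree_contract refines_leaves_contract T c by blast+

lemma contraction_map_mem: "y \<in> F (leaves T) \<Longrightarrow> contraction_map phi T c y \<in> F (leaves (contract T c))"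
  unfolding contraction_map_def
  by (intro sgn_act_mem phi_mem contraction_partitions)

lemma contraction_map_zero: "contraction_map phi T c 0 = 0"
  unfolding contraction_map_def
  by (simp add: phi_zero[OF contraction_partitions] sgn_act_def)

lemma contraction_map_add:
  "y \<in> F (leaves T) \<Longrightarrow> z \<in> F (leaves T)
    \<Longrightarrow> contraction_map phi T c (y + z) = contraction_map phi T c y + contraction_map phi T c z"
  unfolding contraction_map_def
  by (simp add: phi_add[OF contraction_partitions] sgn_act_add)

lemma contraction_map_sum:
  "(\<And>i. i \<in> I \<Longrightarrow> f i \<in> F (leaves T))
    \<Longrightarrow> contraction_map phi T c (sum f I) = (\<Sum>i\<in>I. contraction_map phi T c (f i))"
proof (induction I rule: infinite_finite_induct)
  case (insert i I)
  then have "f i \<in> F (leaves T)" "sum f I \<in> F (leaves T)"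
    by (auto intro: sum_mem[OF set_partition_leaves[OF T]])
  with insert show ?case
    by (simp add: contraction_map_add)
qed (simp_all add: contraction_map_zero)

end

lemma contraction_map_comp:
  assumes T: "index_tree n T" and p: "(c, d) \<in> contraction_pairs n T" and y: "y \<in> F (leaves T)"
  shows "contraction_map phi (contract T c) d (contraction_map phi T c y)
    = sgn_act (sign_exp2 T (c, d)) (phi (leaves T) (leaves (contract2 T (c, d))) y)"
proof -
  have c: "applicable n T c" and d: "applicable n (contract T c) d"
    using p by (simp_all add: contraction_pairs_def contractions_def)
  have T1: "index_tree n (contract T c)"
    using index_tree_contract[OF T c] .
  have T2: "index_tree n (contract2 T (c, d))"
    using index_tree_contract[OF T1 d] by simp
  note partitions = set_partition_leaves[OF T] set_partition_leaves[OF T1] set_partition_leaves[OF T2]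
  have ref1: "Defs.refines (leaves T) (leaves (contract T c))"
    using refines_leaves_contract[OF T c] .
  have ref2: "Defs.refines (leaves (contract T c)) (leaves (contract2 T (c, d)))"
    using refines_leaves_contract[OF T1 d] by simp
  have y1: "phi (leaves T) (leaves (contract T c)) y \<in> F (leaves (contract T c))"
    using phi_mem[OF partitions(1,2) ref1 y] .
  show ?thesis
    using phi_sgn_act[OF partitions(2,3) ref2 y1] phi_comp[OF partitions ref1 ref2 y]
    by (simp add: contraction_map_def sgn_act_sgn_act add.commute)
qed

lemma dmap_eq:
  assumes x: "in_G F n k x"
  shows "dmap phi n k x T' = (if T' \<in> trees n (k - 1) then
      \<Sum>T\<in>trees n k. \<Sum>c\<in>contractions n T. if contract T c = T' then contraction_map phi T c (x T) else 0
    else 0)"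
proof -
  have "(\<Sum>c\<in>contractions n T. if contract T c = T' then contraction_map phi T c (x T) else 0)
      = (\<Sum>S\<in>nonleaves T - {{1..n}}. if contrO T S = T' then sgn_act (sexp T S) (x T) else 0)
      + (\<Sum>S\<in>{S. exceptional T S}. if contrE T S = T' then
          - sgn_act (sexp T S) (phi (leaves T) (leaves (contrE T S)) (x T)) else 0)"
    if T: "T \<in> trees n k" for T
  proof -
    have tree: "index_tree n T" and xT: "x T \<in> F (leaves T)"
      using T x by (simp_all add: trees_def in_G_def)
    have contrO_map: "contraction_map phi T (ContrO S) (x T) = sgn_act (sexp T S) (x T)"
      if "S \<in> nonleaves T - {{1..n}}" for S
      using phi_id[OF set_partition_leaves[OF tree] xT] leaves_contrO[of S T] that
      by (simp add: contraction_map_def)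
    have contrE_map: "contraction_map phi T (ContrE S) y
        = - sgn_act (sexp T S) (phi (leaves T) (leaves (contrE T S)) y)" for S y
      by (simp add: contraction_map_def sgn_act_def)
    show ?thesis
      unfolding sum_contractions[OF tree]
      by (intro arg_cong2[where f = "(+)"] sum.cong refl) (simp_all add: contrO_map contrE_map)
  qed
  then show ?thesis
    by (simp add: dmap_def sum.distrib)
qed

lemma dmap_summand_mem:
  assumes x: "in_G F n k x" and T: "T \<in> trees n k" and c: "c \<in> contractions n T"
    and T': "T' \<in> trees n (k - 1)"
  shows "(if contract T c = T' then contraction_map phi T c (x T) else 0) \<in> F (leaves T')"
  using assms contraction_map_mem[of T c "x T"] zero_mem[OF set_partition_leaves[of n T']]
  by (auto simp: trees_def contractions_def in_G_def)

lemma in_G_dmap: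
  assumes x: "in_G F n k x"
  shows "in_G F n (k - 1) (dmap phi n k x)"
  unfolding in_G_def
proof (intro allI conjI impI)
  fix T' assume T': "T' \<in> trees n (k - 1)"
  then have "set_partition n (leaves T')"
    by (simp add: trees_def set_partition_leaves)
  then show "dmap phi n k x T' \<in> F (leaves T')"
    using T' dmap_summand_mem[OF x _ _ T'] by (simp add: dmap_eq[OF x] sum_mem)
qed (simp add: dmap_def)

lemma contraction_map_dmap:
  assumes x: "in_G F n k x" and T1: "T1 \<in> trees n (k - 1)" and c: "c \<in> contractions n T1"
  shows "contraction_map phi T1 c (dmap phi n k x T1)
    = (\<Sum>T\<in>trees n k. \<Sum>\<sigma>\<in>contractions n T.
        if contract T \<sigma> = T1 then contraction_map phi T1 c (contraction_map phi T \<sigma> (x T)) else 0)"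
proof -
  have tree1: "index_tree n T1" and c: "applicable n T1 c"
    using T1 c by (simp_all add: trees_def contractions_def)
  note summands = dmap_summand_mem[OF x _ _ T1]
  have inner_sums: "(\<Sum>\<sigma>\<in>contractions n T. if contract T \<sigma> = T1 then contraction_map phi T \<sigma> (x T) else 0)
      \<in> F (leaves T1)" if "T \<in> trees n k" for T
    using summands[OF that] by (intro sum_mem set_partition_leaves[OF tree1])
  have map_if: "contraction_map phi T1 c (if P then y else 0) = (if P then contraction_map phi T1 c y else 0)"
    for P y
    using contraction_map_zero[OF tree1 c] by simp
  show ?thesis
    using T1 summands inner_sums
    by (simp add: dmap_eq[OF x] contraction_map_sum[OF tree1 c] map_if cong: sum.cong)
qed

lemma sum_contraction_map_comp:
  assumes T: "index_tree n T" and y: "y \<in> F (leaves T)"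
  shows "(\<Sum>\<sigma>\<in>contractions n T. \<Sum>c\<in>contractions n (contract T \<sigma>). if contract (contract T \<sigma>) c = T''
        then contraction_map phi (contract T \<sigma>) c (contraction_map phi T \<sigma> y) else 0)
    = (\<Sum>p\<in>contraction_pairs n T.
        if contract2 T p = T'' then sgn_act (sign_exp2 T p) (phi (leaves T) (leaves T'') y) else 0)"
    (is "?lhs = ?rhs")
proof -
  have "?lhs = (\<Sum>(\<sigma>, c)\<in>contraction_pairs n T. if contract (contract T \<sigma>) c = T''
      then contraction_map phi (contract T \<sigma>) c (contraction_map phi T \<sigma> y) else 0)"
    unfolding contraction_pairs_def
    using finite_contractions T index_tree_contract
    by (intro sum.Sigma) (auto simp: contractions_def)
  also have "\<dots> = ?rhs"
  proof (intro sum.cong refl)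
    fix p assume p: "p \<in> contraction_pairs n T"
    obtain \<sigma> c where p_eq: "p = (\<sigma>, c)"
      by fastforce
    show "(case p of (\<sigma>, c) \<Rightarrow> if contract (contract T \<sigma>) c = T''
          then contraction_map phi (contract T \<sigma>) c (contraction_map phi T \<sigma> y) else 0)
        = (if contract2 T p = T'' then sgn_act (sign_exp2 T p) (phi (leaves T) (leaves T'') y) else 0)"
      using contraction_map_comp[OF T p[unfolded p_eq] y] p_eq
      by (cases "contract2 T p = T''") simp_all
  qed
  finally show ?thesis .
qed

lemma dmap_dmap_eq:
  assumes x: "in_G F n k x" and T'': "T'' \<in> trees n (k - 1 - 1)"
  shows "dmap phi n (k - 1) (dmap phi n k x) T''
    = (\<Sum>T\<in>trees n k. \<Sum>p\<in>contraction_pairs n T.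
        if contract2 T p = T'' then sgn_act (sign_exp2 T p) (phi (leaves T) (leaves T'') (x T)) else 0)"
proof -
  define path_term where "path_term T \<sigma> T1 c = (if contract T \<sigma> = T1 \<and> contract T1 c = T''
      then contraction_map phi T1 c (contraction_map phi T \<sigma> (x T)) else 0)" for T \<sigma> T1 c
  have summand: "(if contract T1 c = T'' then contraction_map phi T1 c (dmap phi n k x T1) else 0)
      = (\<Sum>T\<in>trees n k. \<Sum>\<sigma>\<in>contractions n T. path_term T \<sigma> T1 c)"
    if "T1 \<in> trees n (k - 1)" "c \<in> contractions n T1" for T1 c
    using contraction_map_dmap[OF x that] by (cases "contract T1 c = T''") (simp_all add: path_term_def)
  have "dmap phi n (k - 1) (dmap phi n k x) T''
      = (\<Sum>T1\<in>trees n (k - 1). \<Sum>c\<in>contractions n T1. \<Sum>T\<in>trees n k. \<Sum>\<sigma>\<in>contractions n T. path_term T \<sigma> T1 c)"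
    using T'' by (simp add: dmap_eq[OF in_G_dmap[OF x]] summand cong: sum.cong)
  also have "\<dots> = (\<Sum>T\<in>trees n k. \<Sum>\<sigma>\<in>contractions n T. \<Sum>T1\<in>trees n (k - 1). \<Sum>c\<in>contractions n T1. path_term T \<sigma> T1 c)"
    by (rule sum_swap_nested)
  also have "\<dots> = (\<Sum>T\<in>trees n k. \<Sum>\<sigma>\<in>contractions n T. \<Sum>c\<in>contractions n (contract T \<sigma>). path_term T \<sigma> (contract T \<sigma>) c)"
  proof (intro sum.cong refl)
    fix T \<sigma> assume "T \<in> trees n k" "\<sigma> \<in> contractions n T"
    then have "contract T \<sigma> \<in> trees n (k - 1)"
      by (rule contract_trees)
    moreover have "(\<Sum>T1\<in>trees n (k - 1). \<Sum>c\<in>contractions n T1. path_term T \<sigma> T1 c)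
        = (\<Sum>T1\<in>trees n (k - 1). if contract T \<sigma> = T1 then \<Sum>c\<in>contractions n T1. path_term T \<sigma> T1 c else 0)"
      by (intro sum.cong refl) (simp add: path_term_def)
    ultimately show "(\<Sum>T1\<in>trees n (k - 1). \<Sum>c\<in>contractions n T1. path_term T \<sigma> T1 c)
        = (\<Sum>c\<in>contractions n (contract T \<sigma>). path_term T \<sigma> (contract T \<sigma>) c)"
      by (simp add: finite_trees)
  qed
  also have "\<dots> = (\<Sum>T\<in>trees n k. \<Sum>p\<in>contraction_pairs n T.
      if contract2 T p = T'' then sgn_act (sign_exp2 T p) (phi (leaves T) (leaves T'') (x T)) else 0)"
    using x sum_contraction_map_comp by (intro sum.cong refl) (simp add: path_term_def trees_def in_G_def)
  finally show ?thesis .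
qed

end

theorem lemma6p8:
  fixes F :: "nat set set \<Rightarrow> 'a::ab_group_add set"
    and phi :: "nat set set \<Rightarrow> nat set set \<Rightarrow> 'a \<Rightarrow> 'a"
    and n :: nat and k :: int
  assumes "strict_system_alg n F phi"
    and "in_G F n k x"
  shows "dmap phi n (k - 1) (dmap phi n k x) = (\<lambda>_. 0)"
proof
  interpret strict_system n F phi
    by unfold_locales (fact assms(1))
  fix T''
  show "dmap phi n (k - 1) (dmap phi n k x) T'' = 0"
  proof (cases "T'' \<in> trees n (k - 1 - 1)")
    case True
    have "(\<Sum>p\<in>contraction_pairs n T. if contract2 T p = T''
        then sgn_act (sign_exp2 T p) (phi (leaves T) (leaves T'') (x T)) else 0) = 0"
      if "T \<in> trees n k" for T
      using that by (intro sum_contraction_pairs_eq_0) (simp add: trees_def)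
    then show ?thesis
      using dmap_dmap_eq[OF assms(2) True] by (simp add: sum.neutral)
  next
    case False
    then show ?thesis
      by (simp add: dmap_def)
  qed
qed

end
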